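(* Let $G$ be a graph on $n$ vertices, $h\geq 3$ a constant, $\Lambda>0$, fix a vertex $v$ and an $h$-coloring $\varphi$ of the vertices of $G$. Suppose $t_{G_\varphi}(v)\geq \Lambda\cdot (2h\log n)^{(h-1)^2}$. Then there exists a vector $P=(p_1,\dots,p_h)\in\mathsf{Product}_h(\Lambda)$ such that, when each vertex of color class $i$ is kept independently with probability $p_i$, the probability that $v$ lies on an $h$-cycle of the induced subgraph of $G_\varphi$ on the kept vertices is at least $(1-1/e)^{h-1}$.
   Context: For the coloring $\varphi:V(G)\to[h]$, let $V_i=\varphi^{-1}(i)$. $G_\varphi$ is the directed graph on $V(G)$ obtained by keeping, for every $i\in[h]$, only the edges of $G$ between $V_i$ and $V_{i+1 \bmod h}$, directed from $V_i$ to $V_{i+1\bmod h}$. $t_{G_\varphi}(v)$ is the number of $h$-cycles of $G_\varphi$ containing $v$. Logarithms are base 2. $\mathsf{Product}_h(\Lambda)$ is the set of vectors $(p_1,\dots,p_h)\in[0,1]^h$ such that each $p_i\in\{2^{-j}: j \text{ an integer}, 0\leq j\leq \log(\Lambda)+1\}$ and $\prod_{i=1}^h p_i\leq 1/\Lambda$. *)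

theory Defs
  imports "HOL-Probability.Probability"
begin

definition simple_graph :: "'a set \<Rightarrow> ('a \<Rightarrow> 'a \<Rightarrow> bool) \<Rightarrow> bool" where
  "simple_graph V E \<longleftrightarrow> finite V \<and> (\<forall>x y. E x y \<longrightarrow> x \<in> V \<and> y \<in> V)
     \<and> (\<forall>x y. E x y \<longrightarrow> E y x) \<and> (\<forall>x. \<not> E x x)"

text \<open>Arcs of G_phi, colours are 0..h-1: keep edges from class i to class (i+1 mod h).\<close>
definition col_arc :: "('a \<Rightarrow> 'a \<Rightarrow> bool) \<Rightarrow> ('a \<Rightarrow> nat) \<Rightarrow> nat \<Rightarrow> 'a \<Rightarrow> 'a \<Rightarrow> bool" where
  "col_arc E \<phi> h a b \<longleftrightarrow> E a b \<and> \<phi> b = (\<phi> a + 1) mod h"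

text \<open>Directed h-cycles of the digraph (W, A), each represented by its set of arcs.\<close>
definition dir_cycles :: "'a set \<Rightarrow> ('a \<Rightarrow> 'a \<Rightarrow> bool) \<Rightarrow> nat \<Rightarrow> ('a \<times> 'a) set set" where
  "dir_cycles W A h = { {(c i, c ((i + 1) mod h)) | i. i < h} | c.
      (\<forall>i<h. c i \<in> W) \<and> inj_on c {..<h} \<and> (\<forall>i<h. A (c i) (c ((i + 1) mod h))) }"

definition t_cycles :: "'a set \<Rightarrow> ('a \<Rightarrow> 'a \<Rightarrow> bool) \<Rightarrow> ('a \<Rightarrow> nat) \<Rightarrow> nat \<Rightarrow> 'a \<Rightarrow> nat" where
  "t_cycles W E \<phi> h v = card {C \<in> dir_cycles W (col_arc E \<phi> h) h. v \<in> fst ` C}"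

definition Product :: "nat \<Rightarrow> real \<Rightarrow> (nat \<Rightarrow> real) set" where
  "Product h \<Lambda> = {p. (\<forall>i<h. \<exists>j::int. 0 \<le> j \<and> real_of_int j \<le> log 2 \<Lambda> + 1 \<and> p i = 2 powr (- real_of_int j))
      \<and> (\<Prod>i<h. p i) \<le> 1 / \<Lambda>}"

definition keep_pmf :: "'a set \<Rightarrow> ('a \<Rightarrow> nat) \<Rightarrow> (nat \<Rightarrow> real) \<Rightarrow> ('a \<Rightarrow> bool) pmf" where
  "keep_pmf V \<phi> p = Pi_pmf V False (\<lambda>u. bernoulli_pmf (p (\<phi> u)))"

end

theory Submission
  imports Defs
begin

(* In the colour-cyclic digraph every arc raises the colour by one modulo h, so a walk
   v -> w_1 -> ... -> w_(h-1) -> v visits the colour classes phi v + 1, ..., phi v + h - 1 in turn;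
   its vertices are distinct, and every h-cycle through v arises from such a walk.  Grouping the
   out-neighbours of a vertex by the dyadic profile of their own walk counts and keeping the
   heaviest group yields exponents j_1, ..., j_(h-1) and a branching tree: v has 2^j_1
   out-neighbours, each of them has 2^j_2 out-neighbours, and so on, the leaves being in-neighbours
   of v.  This loses at most a factor (2 (log n + 1))^((h-1)^2) of the walk count, hence
   2^(j_1 + ... + j_(h-1)) >= Lambda.  Lower the exponents until they sum to ceil (log Lambda), keep
   colour class phi v + i with probability 2^-j_i and class phi v surely.  As p 2^j >= 1 and
   (1 - (1-p)^s) / s decreases in s, each layer of the tree keeps one of its vertices with
   probability at least 1 - 1/e, whatever happens in the other colour classes; so some walk of the
   tree survives with probability at least (1 - 1/e)^(h-1). *)

lemma one_minus_power_ratio_antimono: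
  fixes a :: real
  assumes a: "0 \<le> a" "a \<le> 1" and sm: "s \<le> m"
  shows "real s * (1 - a ^ m) \<le> real m * (1 - a ^ s)"
proof -
  define G where "G k = (\<Sum>i<k. a ^ i)" for k
  have head: "real s * a ^ s \<le> G s"
    unfolding G_def using sum_bounded_below[of "{..<s}" "a ^ s" "\<lambda>i. a ^ i"] a
    by (simp add: power_decreasing)
  have "G m = G s + (\<Sum>i\<in>{s..<m}. a ^ i)"
    unfolding G_def using sm
    by (simp add: atLeast0LessThan[symmetric] sum.atLeastLessThan_concat)
  also have "(\<Sum>i\<in>{s..<m}. a ^ i) \<le> real (m - s) * a ^ s"
    using sum_bounded_above[of "{s..<m}" "\<lambda>i. a ^ i" "a ^ s"] a by (simp add: power_decreasing)
  finally have "real s * G m \<le> real s * (G s + real (m - s) * a ^ s)"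
    by (intro mult_left_mono) auto
  also have "\<dots> = real s * G s + real (m - s) * (real s * a ^ s)"
    by (simp add: algebra_simps)
  also have "\<dots> \<le> real s * G s + real (m - s) * G s"
    using head by (simp add: mult_left_mono)
  also have "\<dots> = real m * G s" using sm by (simp add: algebra_simps)
  finally have "(1 - a) * (real s * G m) \<le> (1 - a) * (real m * G s)"
    using a by (intro mult_left_mono) auto
  then show ?thesis unfolding G_def one_diff_power_eq by (simp add: algebra_simps)
qed

lemma one_minus_power_ge_ratio:
  fixes p :: real
  assumes p: "0 \<le> p" "p \<le> 1" "1 \<le> p * real m" and sm: "s \<le> m"
  shows "(1 - 1 / exp 1) * real s / real m \<le> 1 - (1 - p) ^ s"
proof -
  have m: "0 < real m" using p by (cases m) auto
  have "(1 - p) ^ m \<le> exp (- p) ^ m"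
    using p by (intro power_mono) (auto simp: exp_ge_add_one_self[of "-p", simplified])
  also have "\<dots> = exp (- (p * real m))" by (simp add: exp_of_nat_mult[symmetric] mult.commute)
  also have "\<dots> \<le> exp (- 1)" using p by simp
  finally have "(1 - p) ^ m \<le> 1 / exp 1" by (simp add: exp_minus field_simps)
  then have "(1 - 1 / exp 1) * real s \<le> real s * (1 - (1 - p) ^ m)"
    by (simp add: mult_left_mono mult.commute)
  also have "\<dots> \<le> real m * (1 - (1 - p) ^ s)"
    using one_minus_power_ratio_antimono[of "1 - p" s m] p sm by simp
  finally show ?thesis using m by (simp add: field_simps)
qed

lemma dyadic_mult_ge_one:
  fixes p :: real
  assumes p: "(1/2) ^ j \<le> p" and m: "2 ^ j \<le> m"
  shows "1 \<le> p * real m"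
proof -
  have "(2::real) ^ j \<le> real m" using m by (metis of_nat_le_iff of_nat_numeral of_nat_power)
  then have "(1/2) ^ j * 2 ^ j \<le> p * real m"
    using p by (intro mult_mono) (auto intro: order_trans[OF zero_le_power p])
  then show ?thesis by (simp add: power_mult_distrib[symmetric])
qed

lemma ex_dyadic_bounds:
  fixes m K :: nat
  assumes "0 < m" "m < 2 ^ Suc K"
  shows "\<exists>j \<le> K. 2 ^ j \<le> m \<and> m < 2 ^ Suc j"
proof -
  obtain j where j: "2 ^ j \<le> m" "m < 2 ^ Suc j" using ex_power_ivl1[of 2 m] assms by auto
  then have "(2::nat) ^ j < 2 ^ Suc K" using assms by linarith
  then have "j \<le> K" using power_strict_increasing_iff[of "2::nat" j "Suc K"] by simp
  then show ?thesis using j by blast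
qed

lemma ex_heavy_fibre:
  fixes w :: "'a \<Rightarrow> nat" and lab :: "'a \<Rightarrow> 'b"
  assumes Y: "finite Y" and L: "finite L" "L \<noteq> {}" and lab: "lab ` Y \<subseteq> L"
  shows "\<exists>l\<in>L. sum w Y \<le> card L * sum w {y\<in>Y. lab y = l}"
proof -
  define g where "g l = sum w {y\<in>Y. lab y = l}" for l
  have "Max (g ` L) \<in> g ` L" using L by (intro Max_in) auto
  then obtain l where l: "l \<in> L" "g l = Max (g ` L)" by (metis imageE)
  have "sum w Y = (\<Sum>l\<in>L. g l)" unfolding g_def by (rule sum.group[OF Y L(1) lab, symmetric])
  also have "\<dots> \<le> card L * g l" using sum_bounded_above[of L g "g l"] L l by simp
  finally show ?thesis using l(1) unfolding g_def by blast
qed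

(* The heaviest class carries a 1 / card L share of the weight, and its size lies between 2^j
   and 2^(j+1). *)
lemma ex_heavy_dyadic_class:
  fixes w :: "'a \<Rightarrow> nat" and lab :: "'a \<Rightarrow> 'b"
  assumes Y: "finite Y" "card Y < 2 ^ Suc K" and pos: "0 < sum w Y"
    and L: "finite L" "lab ` Y \<subseteq> L" and w: "\<And>y. y \<in> Y \<Longrightarrow> w y \<le> F (lab y)"
  shows "\<exists>l\<in>L. \<exists>j\<le>K. 2 ^ j \<le> card {y\<in>Y. lab y = l} \<and> sum w Y \<le> 2 * card L * 2 ^ j * F l"
proof -
  have "Y \<noteq> {}" using pos by auto
  then have "L \<noteq> {}" using L(2) by blast
  then obtain l where l: "l \<in> L" and heavy: "sum w Y \<le> card L * sum w {y\<in>Y. lab y = l}"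
    using ex_heavy_fibre[OF Y(1) L(1) _ L(2)] by blast
  define G where "G = {y\<in>Y. lab y = l}"
  have G: "finite G" "sum w G \<le> card G * F l"
    using Y(1) sum_bounded_above[of G w "F l"] w unfolding G_def by auto
  then have "0 < card G" using pos heavy unfolding G_def by (metis gr0I mult_0 mult_0_right not_le)
  moreover have "card G < 2 ^ Suc K" using card_mono[OF Y(1), of G] Y(2) unfolding G_def by auto
  ultimately obtain j where j: "j \<le> K" "2 ^ j \<le> card G" "card G < 2 ^ Suc j"
    using ex_dyadic_bounds by blast
  have "sum w Y \<le> card L * (card G * F l)" using heavy G(2) unfolding G_def
    by (meson mult_le_mono2 order_trans)
  also have "\<dots> \<le> card L * (2 ^ Suc j * F l)" using j(3) by simp
  finally show ?thesis using l j(1,2) unfolding G_def by (intro bexI[OF _ l] exI[of _ j]) (auto simp: algebra_simps)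
qed

lemma power_Suc_square_ge:
  fixes k :: nat
  shows "2 * (k + 1) ^ r * (2 * (k + 1)) ^ (r\<^sup>2) \<le> (2 * (k + 1)) ^ (Suc r)\<^sup>2"
proof -
  have "(k + 1) ^ r \<le> (2 * (k + 1)) ^ r" by (intro power_mono) auto
  then have "2 * (k + 1) ^ r \<le> (2 * (k + 1)) ^ Suc r"
    using mult_le_mono[of 2 "2 * (k + 1)"] by simp
  then have "2 * (k + 1) ^ r * (2 * (k + 1)) ^ (r\<^sup>2) \<le> (2 * (k + 1)) ^ Suc r * (2 * (k + 1)) ^ (r\<^sup>2)"
    by (rule mult_le_mono1)
  also have "\<dots> = (2 * (k + 1)) ^ (Suc r + r\<^sup>2)" by (simp only: power_add)
  also have "\<dots> \<le> (2 * (k + 1)) ^ (Suc r)\<^sup>2"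
    by (intro power_increasing) (auto simp: power2_eq_square)
  finally show ?thesis .
qed

lemma exists_list_le_sum_list_eq:
  fixes js :: "nat list"
  assumes "J \<le> sum_list js"
  shows "\<exists>js'. list_all2 (\<le>) js' js \<and> sum_list js' = J"
  using assms
proof (induction js arbitrary: J)
  case (Cons a js)
  show ?case
  proof (cases "J \<le> sum_list js")
    case True
    then obtain js' where "list_all2 (\<le>) js' js" "sum_list js' = J" using Cons.IH by blast
    then show ?thesis by (intro exI[of _ "0 # js'"]) auto
  next
    case False
    then show ?thesis
      using Cons.prems by (intro exI[of _ "(J - sum_list js) # js"]) (auto simp: list_all2_refl)
  qed
qed simp

lemma floor_log2_bounds:
  assumes "0 < n"
  defines "K \<equiv> nat \<lfloor>log 2 (real n)\<rfloor>"
  shows "n < 2 ^ Suc K" "real K \<le> log 2 (real n)"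
proof -
  have "real n < 2 powr real (Suc K)"
    using assms log_less_iff[of 2 "real n" "real (Suc K)"] unfolding K_def by linarith
  also have "\<dots> = 2 ^ Suc K" by (rule powr_realpow) simp
  finally show "n < 2 ^ Suc K" by (simp only: of_nat_less_numeral_power_cancel_iff)
  show "real K \<le> log 2 (real n)" using assms by simp
qed

lemma nat_ceiling_log2_bounds:
  assumes "1/2 \<le> x"
  shows "x \<le> 2 ^ nat \<lceil>log 2 x\<rceil>" "real (nat \<lceil>log 2 x\<rceil>) \<le> log 2 x + 1"
proof -
  have "-1 \<le> log 2 x" using assms log_le_cancel_iff[of 2 "1/2" x] by (simp add: log_divide)
  then show "real (nat \<lceil>log 2 x\<rceil>) \<le> log 2 x + 1" by linarith
  have "x = 2 powr log 2 x" using assms by simp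
  also have "\<dots> \<le> 2 powr real (nat \<lceil>log 2 x\<rceil>)" by (intro powr_mono) linarith+
  finally show "x \<le> 2 ^ nat \<lceil>log 2 x\<rceil>" by (simp add: powr_realpow)
qed

lemma inj_on_add_mod: "inj_on (\<lambda>i. (a + i) mod h) {..<(h::nat)}"
proof (rule inj_onI)
  have eq: "i = j" if "i \<le> j" "j < h" "(a + j) mod h = (a + i) mod h" for i j
  proof -
    have "h dvd j - i" using that mod_eq_dvd_iff_nat[of "a + i" "a + j" h] by simp
    then show ?thesis using that by (metis diff_is_0_eq dvd_imp_le le_antisym less_imp_diff_less not_gr0 not_le)
  qed
  fix i j assume "i \<in> {..<h}" "j \<in> {..<h}" "(a + i) mod h = (a + j) mod h"
  then show "i = j" using eq[of i j] eq[of j i] by (cases "i \<le> j") auto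
qed

lemma add_mod_image_lessThan:
  assumes "0 < (h::nat)"
  shows "(\<lambda>i. (a + i) mod h) ` {..<h} = {..<h}"
  using assms by (intro endo_inj_surj inj_on_add_mod) auto

lemma prod_rotate_mod:
  assumes "0 < (h::nat)"
  shows "(\<Prod>i<h. f ((a + i) mod h)) = (\<Prod>c<h. f c)"
  using prod.reindex[OF inj_on_add_mod, of f a h] add_mod_image_lessThan[OF assms] by (simp add: comp_def)

section \<open>Independent Bernoulli coordinates\<close>

lemma prob_Pi_pmf_ex_true:
  assumes fin: "finite T" and sub: "T' \<subseteq> T"
    and P: "\<And>y. y \<in> T \<Longrightarrow> P y = bernoulli_pmf p" and p: "0 \<le> p" "p \<le> 1"
  shows "measure_pmf.prob (Pi_pmf T False P) {f. \<exists>y\<in>T'. f y} = 1 - (1 - p) ^ card T'"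
proof -
  have compl: "{f. \<exists>y\<in>T'. f y} = UNIV - Pi T (\<lambda>y. if y \<in> T' then {False} else UNIV)"
    using sub by (auto simp: Pi_def)
  have "measure_pmf.prob (Pi_pmf T False P) (Pi T (\<lambda>y. if y \<in> T' then {False} else UNIV))
      = (\<Prod>y\<in>T. measure_pmf.prob (P y) (if y \<in> T' then {False} else UNIV))"
    by (rule measure_Pi_pmf_Pi[OF fin])
  also have "\<dots> = (\<Prod>y\<in>T. if y \<in> T' then 1 - p else 1)"
    by (intro prod.cong refl) (use P p in \<open>auto simp: measure_pmf_single\<close>)
  also have "\<dots> = (1 - p) ^ card T'"
    using fin sub by (simp add: prod.If_cases Int_absorb1)
  finally show ?thesis unfolding compl
    by (subst measure_pmf.prob_compl[unfolded space_measure_pmf]) auto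
qed

lemma prob_Pi_pmf_ex_true_ge:
  assumes fin: "finite T" and sub: "T' \<subseteq> T"
    and P: "\<And>y. y \<in> T \<Longrightarrow> P y = bernoulli_pmf p" and p: "0 \<le> p" "p \<le> 1" "1 \<le> p * real (card T)"
  shows "(1 - 1 / exp 1) * real (card T') / real (card T)
    \<le> measure_pmf.prob (Pi_pmf T False P) {f. \<exists>y\<in>T'. f y}"
  using one_minus_power_ge_ratio[OF p card_mono[OF fin sub]] prob_Pi_pmf_ex_true[OF fin sub P p(1,2)]
  by simp

lemma emeasure_Pi_pmf_split:
  assumes "finite V" "T \<subseteq> V"
  shows "emeasure (Pi_pmf V d P) X =
    (\<integral>\<^sup>+f. emeasure (Pi_pmf T d P) {g. (\<lambda>x. if x \<in> V - T then f x else g x) \<in> X}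
      \<partial>Pi_pmf (V - T) d P)"
proof -
  have "Pi_pmf V d P = map_pmf (\<lambda>(f, g) x. if x \<in> V - T then f x else g x)
      (pair_pmf (Pi_pmf (V - T) d P) (Pi_pmf T d P))"
    using Pi_pmf_union[of "V - T" T d P] assms by (simp add: Un_absorb2 finite_subset Int_commute)
  then show ?thesis
    by (simp add: nn_integral_pair_pmf' indicator_def flip: nn_integral_indicator)
qed

lemma emeasure_Pi_pmf_local:
  assumes fin: "finite V" and TV: "T \<subseteq> V"
    and local: "\<And>S S'. (\<And>u. u \<in> V - T \<Longrightarrow> S u = S' u) \<Longrightarrow> S \<in> X \<longleftrightarrow> S' \<in> X"
  shows "emeasure (Pi_pmf V d P) X = emeasure (Pi_pmf (V - T) d P) X"
proof -
  have "(\<lambda>x. if x \<in> V - T then f x else g x) \<in> X \<longleftrightarrow> f \<in> X" for f g by (rule local) simp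
  then have "{g. (\<lambda>x. if x \<in> V - T then f x else g x) \<in> X} = (if f \<in> X then UNIV else {})" for f
    by auto
  then have "emeasure (Pi_pmf T d P) {g. (\<lambda>x. if x \<in> V - T then f x else g x) \<in> X} = indicator X f" for f
    by (simp add: indicator_def measure_pmf.emeasure_space_1[simplified])
  then show ?thesis by (simp add: emeasure_Pi_pmf_split[OF fin TV])
qed

lemma nn_integral_card_Collect:
  fixes M :: "'b pmf"
  assumes "finite T" "0 \<le> c"
  shows "(\<integral>\<^sup>+f. ennreal (c * real (card {y\<in>T. B y f})) \<partial>M) = (\<Sum>y\<in>T. ennreal c * emeasure M {f. B y f})"
proof -
  have "ennreal (c * real (card {y\<in>T. B y f})) = (\<Sum>y\<in>T. ennreal c * indicator {f. B y f} f)" for f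
    using assms by (simp add: indicator_def ennreal_mult' sum.If_cases Collect_conj_eq
        ennreal_of_nat_eq_real_of_nat mult.commute)
  then show ?thesis by (simp add: nn_integral_sum nn_integral_cmult_indicator)
qed

lemma prob_ex_kept_witness_ge:
  fixes P :: "'a \<Rightarrow> bool pmf" and B :: "'a \<Rightarrow> ('a \<Rightarrow> bool) \<Rightarrow> bool"
  assumes fin: "finite V" and TV: "T \<subseteq> V"
    and P: "\<And>y. y \<in> T \<Longrightarrow> P y = bernoulli_pmf p"
    and p: "0 \<le> p" "p \<le> 1" "1 \<le> p * real (card T)"
    and local: "\<And>y S S'. y \<in> T \<Longrightarrow> (\<And>u. u \<in> V - T \<Longrightarrow> S u = S' u) \<Longrightarrow> B y S = B y S'"
    and q: "\<And>y. y \<in> T \<Longrightarrow> q \<le> measure_pmf.prob (Pi_pmf V False P) {S. B y S}"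
  shows "(1 - 1 / exp 1) * q \<le> measure_pmf.prob (Pi_pmf V False P) {S. \<exists>y\<in>T. S y \<and> B y S}"
proof (cases "q \<le> 0")
  case True
  then show ?thesis by (simp add: mult_nonneg_nonpos order.trans[OF _ measure_nonneg])
next
  case False
  define Out where "Out = Pi_pmf (V - T) False P"
  define mg where "mg f g = (\<lambda>x. if x \<in> V - T then f x else g x)" for f g :: "'a \<Rightarrow> bool"
  define E where "E = {S. \<exists>y\<in>T. S y \<and> B y S}"
  define c where "c = (1 - 1 / exp 1) / real (card T)"
  have finT: "finite T" using fin TV finite_subset by blast
  have c: "0 \<le> c" unfolding c_def by simp
  have B_mg: "B y (mg f g) = B y f" if "y \<in> T" for y f g
    by (rule local[OF that]) (simp add: mg_def)
  (* Given the coordinates f outside T, the event E asks for a kept vertex among {y \<in> T. B y f}. *)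
  have inner: "ennreal (c * real (card {y\<in>T. B y f})) \<le> emeasure (Pi_pmf T False P) {g. mg f g \<in> E}" for f
  proof -
    have "{g. mg f g \<in> E} = {g. \<exists>y\<in>{y\<in>T. B y f}. g y}"
      unfolding E_def using B_mg by (auto simp: mg_def)
    then show ?thesis
      using prob_Pi_pmf_ex_true_ge[OF finT _ P p, of "{y\<in>T. B y f}"]
      unfolding c_def measure_pmf.emeasure_eq_measure by (simp add: ennreal_leI)
  qed
  have Out_B: "ennreal q \<le> emeasure Out {f. B y f}" if y: "y \<in> T" for y
  proof -
    have "S \<in> {S. B y S} \<longleftrightarrow> S' \<in> {S. B y S}" if "\<And>u. u \<in> V - T \<Longrightarrow> S u = S' u" for S S'
      using local[OF y that] by simp
    then have "emeasure (Pi_pmf V False P) {S. B y S} = emeasure Out {S. B y S}"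
      unfolding Out_def by (rule emeasure_Pi_pmf_local[OF fin TV])
    then show ?thesis using q[OF y] by (simp add: measure_pmf.emeasure_eq_measure ennreal_leI)
  qed
  have "(1 - 1 / exp 1) * q = (\<Sum>y\<in>T. c * q)"
    using p by (cases "card T") (simp_all add: c_def)
  then have "ennreal ((1 - 1 / exp 1) * q) = (\<Sum>y\<in>T. ennreal c * ennreal q)"
    using c False by (simp add: ennreal_mult[symmetric] ennreal_of_nat_eq_real_of_nat mult.assoc)
  also have "\<dots> \<le> (\<Sum>y\<in>T. ennreal c * emeasure Out {f. B y f})"
    using Out_B by (intro sum_mono mult_left_mono) auto
  also have "\<dots> = (\<integral>\<^sup>+f. ennreal (c * real (card {y\<in>T. B y f})) \<partial>Out)"
    using finT c by (rule nn_integral_card_Collect[symmetric])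
  also have "\<dots> \<le> emeasure (Pi_pmf V False P) E"
    unfolding emeasure_Pi_pmf_split[OF fin TV] Out_def mg_def[symmetric] by (intro nn_integral_mono inner)
  finally show ?thesis unfolding E_def measure_pmf.emeasure_eq_measure by simp
qed

section \<open>Walks and branching trees\<close>

definition walks :: "('a \<Rightarrow> 'a \<Rightarrow> bool) \<Rightarrow> 'a \<Rightarrow> nat \<Rightarrow> 'a \<Rightarrow> 'a list set" where
  "walks A v r x = {ws. length ws = r \<and> successively A (x # ws @ [v])}"

lemma walks_0 [simp]: "walks A v 0 x = (if A x v then {[]} else {})"
  by (auto simp: walks_def)

lemma walks_Suc: "walks A v (Suc r) x = (\<Union>y\<in>{y. A x y}. (#) y ` walks A v r y)"
  by (auto simp: walks_def length_Suc_conv)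

lemma finite_walks:
  assumes "\<And>x. finite {y. A x y}"
  shows "finite (walks A v r x)"
  by (induction r arbitrary: x) (simp_all add: walks_Suc assms)

lemma card_walks_Suc:
  assumes "\<And>x. finite {y. A x y}"
  shows "card (walks A v (Suc r) x) = (\<Sum>y | A x y. card (walks A v r y))"
  unfolding walks_Suc using assms finite_walks[OF assms]
  by (subst card_UN_disjoint) (auto simp: card_image)

lemma successively_colour:
  assumes col: "\<And>x y. A x y \<Longrightarrow> \<phi> y = Suc (\<phi> x) mod h"
    and walk: "successively A (x # ys)" and i: "i < length ys"
  shows "\<phi> (ys ! i) = (\<phi> x + Suc i) mod h"
  using i
proof (induction i)
  case 0
  then show ?case using successively_nth[OF walk, of 0] col by simp
next
  case (Suc i)
  then have "A (ys ! i) (ys ! Suc i)" using successively_nth[OF walk, of "Suc i"] by simp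
  then show ?case using Suc col by (simp add: mod_Suc_eq)
qed

definition kept_walk :: "('a \<Rightarrow> 'a \<Rightarrow> bool) \<Rightarrow> 'a \<Rightarrow> nat \<Rightarrow> 'a \<Rightarrow> ('a \<Rightarrow> bool) \<Rightarrow> bool" where
  "kept_walk A v r x S \<longleftrightarrow> (\<exists>ws\<in>walks A v r x. \<forall>u\<in>set ws. S u)"

lemma kept_walk_0 [simp]: "kept_walk A v 0 x S \<longleftrightarrow> A x v"
  by (simp add: kept_walk_def)

lemma kept_walk_Suc: "kept_walk A v (Suc r) x S \<longleftrightarrow> (\<exists>y. A x y \<and> S y \<and> kept_walk A v r y S)"
  by (auto simp: kept_walk_def walks_Suc)

lemma kept_walk_cong:
  assumes arcs: "\<And>x y. A x y \<Longrightarrow> y \<in> V \<and> \<phi> y = Suc (\<phi> x) mod h"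
    and agree: "\<And>u i. u \<in> V \<Longrightarrow> i < r \<Longrightarrow> \<phi> u = (\<phi> x + Suc i) mod h \<Longrightarrow> S u = S' u"
  shows "kept_walk A v r x S = kept_walk A v r x S'"
proof -
  have "S u = S' u" if ws: "ws \<in> walks A v r x" and u: "u \<in> set ws" for ws u
  proof -
    obtain i where i: "i < r" "u = ws ! i" using ws u by (auto simp: walks_def in_set_conv_nth)
    have walk: "successively A (x # ws @ [v])" using ws by (simp add: walks_def)
    have "\<phi> ((ws @ [v]) ! i) = (\<phi> x + Suc i) mod h"
      using i ws by (intro successively_colour[OF _ walk]) (auto simp: arcs walks_def)
    then have "\<phi> u = (\<phi> x + Suc i) mod h"
      using i ws by (simp add: walks_def nth_append)
    moreover have "u \<in> V"
      using successively_nth[OF walk, of i] arcs i ws by (auto simp: walks_def nth_append)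
    ultimately show ?thesis using agree i by blast
  qed
  then show ?thesis unfolding kept_walk_def by blast
qed

lemma kept_walk_cong_colour_class:
  assumes arcs: "\<And>x y. A x y \<Longrightarrow> y \<in> V \<and> \<phi> y = Suc (\<phi> x) mod h"
    and r: "r < h" and x: "\<phi> x < h"
    and agree: "\<And>u. u \<in> V \<Longrightarrow> \<phi> u \<noteq> \<phi> x \<Longrightarrow> S u = S' u"
  shows "kept_walk A v r x S = kept_walk A v r x S'"
proof (rule kept_walk_cong[OF arcs agree])
  fix u i assume i: "i < r" and u: "\<phi> u = (\<phi> x + Suc i) mod h"
  show "\<phi> u \<noteq> \<phi> x"
  proof
    assume "\<phi> u = \<phi> x"
    then have "(\<phi> x + Suc i) mod h = (\<phi> x + 0) mod h" using u x by simp
    then have "Suc i = 0"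
      by (rule inj_onD[OF inj_on_add_mod]) (use r i in auto)
    then show False by simp
  qed
qed

fun branching_tree :: "('a \<Rightarrow> 'a \<Rightarrow> bool) \<Rightarrow> 'a \<Rightarrow> nat list \<Rightarrow> 'a \<Rightarrow> bool" where
  "branching_tree A v [] x \<longleftrightarrow> A x v"
| "branching_tree A v (j # js) x \<longleftrightarrow>
    (\<exists>T \<subseteq> {y. A x y}. 2 ^ j \<le> card T \<and> (\<forall>y\<in>T. branching_tree A v js y))"

lemma branching_tree_mono:
  "list_all2 (\<le>) js' js \<Longrightarrow> branching_tree A v js x \<Longrightarrow> branching_tree A v js' x"
proof (induction js' js arbitrary: x rule: list_all2_induct)
  case (Cons j' js' j js)
  then obtain T where T: "T \<subseteq> {y. A x y}" "2 ^ j \<le> card T" "\<forall>y\<in>T. branching_tree A v js y"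
    by auto
  have "(2::nat) ^ j' \<le> 2 ^ j" using Cons by simp
  then have "2 ^ j' \<le> card T" using T by linarith
  then show ?case using T Cons.IH by auto
qed simp

lemma prob_kept_walk_ge:
  assumes fin: "finite V" and arcs: "\<And>x y. A x y \<Longrightarrow> y \<in> V \<and> \<phi> y = Suc (\<phi> x) mod h"
    and len: "length js < h" and tree: "branching_tree A v js x"
    and p: "\<And>i. i < length js \<Longrightarrow>
      (1/2) ^ (js ! i) \<le> p ((\<phi> x + Suc i) mod h) \<and> p ((\<phi> x + Suc i) mod h) \<le> 1"
  shows "(1 - 1 / exp 1) ^ length js
    \<le> measure_pmf.prob (keep_pmf V \<phi> p) {S. kept_walk A v (length js) x S}"
  using len tree p
proof (induction js arbitrary: x)
  case Nil
  then show ?case by simp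
next
  case (Cons j js)
  obtain T where T: "T \<subseteq> {y. A x y}" "2 ^ j \<le> card T" "\<forall>y\<in>T. branching_tree A v js y"
    using Cons.prems(2) by auto
  define c where "c = Suc (\<phi> x) mod h"
  have c: "c < h" "\<phi> y = c" if "y \<in> T" for y
    using Cons.prems(1) T(1) that arcs unfolding c_def by auto
  have TV: "T \<subseteq> V" using T(1) arcs by blast
  have pc: "(1/2) ^ j \<le> p c" "p c \<le> 1" using Cons.prems(3)[of 0] unfolding c_def by auto
  then have pc0: "0 \<le> p c" by (meson order_trans zero_le_divide_1_iff zero_le_numeral zero_le_power)
  have pT: "1 \<le> p c * real (card T)" using pc(1) T(2) by (rule dyadic_mult_ge_one)
  have "(1 - 1 / exp 1) * (1 - 1 / exp 1) ^ length js \<le> measure_pmf.prob (keep_pmf V \<phi> p)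
      {S. \<exists>y\<in>T. S y \<and> kept_walk A v (length js) y S}"
    unfolding keep_pmf_def
  proof (rule prob_ex_kept_witness_ge[OF fin TV _ pc0 pc(2) pT])
    show "bernoulli_pmf (p (\<phi> y)) = bernoulli_pmf (p c)" if "y \<in> T" for y
      using c that by simp
  next
    fix y and S S' :: "'a \<Rightarrow> bool"
    assume y: "y \<in> T" and agree: "\<And>u. u \<in> V - T \<Longrightarrow> S u = S' u"
    show "kept_walk A v (length js) y S = kept_walk A v (length js) y S'"
      using Cons.prems(1) c y agree by (intro kept_walk_cong_colour_class[OF arcs]) auto
  next
    fix y assume y: "y \<in> T"
    have "(\<phi> y + Suc i) mod h = (\<phi> x + Suc (Suc i)) mod h" for i
      using c(2)[OF y] unfolding c_def by (metis add_Suc add_Suc_right mod_add_left_eq)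
    then show "(1 - 1 / exp 1) ^ length js \<le> measure_pmf.prob
        (Pi_pmf V False (\<lambda>u. bernoulli_pmf (p (\<phi> u)))) {S. kept_walk A v (length js) y S}"
      using Cons.IH[of y] Cons.prems(1,3) T(3) y unfolding keep_pmf_def by fastforce
  qed
  also have "\<dots> \<le> measure_pmf.prob (keep_pmf V \<phi> p) {S. kept_walk A v (length (j # js)) x S}"
    using T(1) by (intro measure_pmf.finite_measure_mono) (auto simp: kept_walk_Suc)
  finally show ?case by simp
qed

lemma card_walks_le_branching_tree:
  assumes fin: "\<And>x. finite {y. A x y}" and deg: "\<And>x. card {y. A x y} < 2 ^ Suc K"
    and ne: "walks A v r x \<noteq> {}"
  shows "\<exists>js. length js = r \<and> set js \<subseteq> {..K} \<and> branching_tree A v js x \<and>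
    card (walks A v r x) \<le> (2 * (K + 1)) ^ r\<^sup>2 * 2 ^ sum_list js"
  using ne
proof (induction r arbitrary: x)
  case 0
  then show ?case by (intro exI[of _ "[]"]) (auto split: if_splits)
next
  case (Suc r)
  define F where "F js = (2 * (K + 1)) ^ r\<^sup>2 * 2 ^ sum_list js" for js
  define P where "P y js \<longleftrightarrow> length js = r \<and> set js \<subseteq> {..K} \<and> branching_tree A v js y \<and>
    card (walks A v r y) \<le> F js" for y js
  define Y where "Y = {y. A x y \<and> walks A v r y \<noteq> {}}"
  define L where "L = {js. set js \<subseteq> {..K} \<and> length js = r}"
  obtain lab where lab: "\<forall>y\<in>Y. P y (lab y)"
    using Suc.IH bchoice[of Y P] unfolding Y_def P_def F_def by blast
  have L: "finite L" "card L = (K + 1) ^ r"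
    unfolding L_def by (auto intro: finite_lists_length_eq simp: card_lists_length_eq)
  have "card Y \<le> card {y. A x y}" using fin unfolding Y_def by (intro card_mono) auto
  then have Y: "finite Y" "card Y < 2 ^ Suc K"
    using deg[of x] fin[of x] unfolding Y_def by (auto intro: rev_finite_subset)
  have total: "card (walks A v (Suc r) x) = (\<Sum>y\<in>Y. card (walks A v r y))"
    unfolding card_walks_Suc[OF fin] Y_def
    by (rule sum.mono_neutral_right) (auto simp: fin finite_walks[OF fin])
  moreover have "0 < card (walks A v (Suc r) x)"
    using Suc.prems finite_walks[OF fin] by (simp add: card_gt_0_iff)
  moreover have "lab ` Y \<subseteq> L" using lab unfolding L_def P_def by auto
  ultimately obtain l j where l: "l \<in> L" and j: "j \<le> K" "2 ^ j \<le> card {y\<in>Y. lab y = l}"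
    and heavy: "card (walks A v (Suc r) x) \<le> 2 * card L * 2 ^ j * F l"
    using ex_heavy_dyadic_class[OF Y, of "\<lambda>y. card (walks A v r y)" L lab F] L(1) lab
    unfolding P_def by auto
  have "2 * card L * 2 ^ j * F l = 2 * (K + 1) ^ r * (2 * (K + 1)) ^ r\<^sup>2 * 2 ^ sum_list (j # l)"
    by (simp add: F_def L(2) power_add)
  also have "\<dots> \<le> (2 * (K + 1)) ^ (Suc r)\<^sup>2 * 2 ^ sum_list (j # l)"
    by (intro mult_le_mono1 power_Suc_square_ge)
  finally have bound: "card (walks A v (Suc r) x) \<le> (2 * (K + 1)) ^ (Suc r)\<^sup>2 * 2 ^ sum_list (j # l)"
    using heavy by simp
  have "{y\<in>Y. lab y = l} \<subseteq> {y. A x y}" "\<forall>y\<in>{y\<in>Y. lab y = l}. branching_tree A v l y"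
    using lab unfolding Y_def P_def by auto
  then have "branching_tree A v (j # l) x" using j(2) by auto
  then show ?case using bound j(1) l unfolding L_def by (intro exI[of _ "j # l"]) auto
qed

section \<open>Cycles through a vertex\<close>

definition cycle_arcs :: "nat \<Rightarrow> (nat \<Rightarrow> 'a) \<Rightarrow> ('a \<times> 'a) set" where
  "cycle_arcs h c = (\<lambda>i. (c i, c ((i + 1) mod h))) ` {..<h}"

lemma mem_dir_cycles_iff:
  "C \<in> dir_cycles W A h \<longleftrightarrow> (\<exists>c. C = cycle_arcs h c \<and> (\<forall>i<h. c i \<in> W) \<and> inj_on c {..<h}
     \<and> (\<forall>i<h. A (c i) (c ((i + 1) mod h))))"
  unfolding dir_cycles_def cycle_arcs_def by (auto simp: image_def)

lemma cycle_arcs_rotate: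
  assumes "a < h"
  shows "cycle_arcs h (\<lambda>k. c ((a + k) mod h)) = cycle_arcs h c"
proof -
  have "((a + k) mod h + 1) mod h = (a + (k + 1) mod h) mod h" for k
    by (simp add: mod_Suc_eq mod_add_right_eq)
  then have "cycle_arcs h (\<lambda>k. c ((a + k) mod h))
      = (\<lambda>i. (c i, c ((i + 1) mod h))) ` (\<lambda>k. (a + k) mod h) ` {..<h}"
    unfolding cycle_arcs_def image_image by simp
  then show ?thesis using assms by (simp add: add_mod_image_lessThan cycle_arcs_def)
qed

lemma rotated_cycle_walk:
  assumes h: "0 < h" and a: "a < h" "c a = v" and cA: "\<forall>i<h. A (c i) (c ((i + 1) mod h))"
  defines "ws \<equiv> map (\<lambda>k. c ((a + k) mod h)) [1..<h]"
  shows "ws \<in> walks A v (h - 1) v" "cycle_arcs h (\<lambda>i. (v # ws) ! i) = cycle_arcs h c"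
proof -
  define c' where "c' k = c ((a + k) mod h)" for k
  have nth: "(v # ws @ [v]) ! i = c' i" if i: "i \<le> h" for i
  proof -
    consider "i = 0" | "0 < i" "i < h" | "i = h" using i by linarith
    then show ?thesis
    proof cases
      case 1
      then show ?thesis using a by (simp add: c'_def)
    next
      case 2
      then show ?thesis by (auto simp: ws_def c'_def nth_append gr0_conv_Suc)
    next
      case 3
      then show ?thesis using a h by (simp add: c'_def ws_def nth_append)
    qed
  qed
  have arc: "A (c' i) (c' (Suc i))" if "i < h" for i
    using cA[rule_format, of "(a + i) mod h"] h by (simp add: c'_def mod_Suc_eq)
  have "length (v # ws @ [v]) = Suc h" using h by (simp add: ws_def)
  then have "successively A (v # ws @ [v])"
    unfolding successively_conv_nth using arc nth by (metis Suc_leI Suc_less_eq less_imp_le_nat)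
  then show "ws \<in> walks A v (h - 1) v" by (simp add: walks_def ws_def)
  have "(v # ws) ! i = c' i" if "i < h" for i
    using nth[of i] that h by (simp add: ws_def nth_append flip: append_Cons)
  then have "cycle_arcs h (\<lambda>i. (v # ws) ! i) = cycle_arcs h c'"
    unfolding cycle_arcs_def using h by (intro image_cong) auto
  then show "cycle_arcs h (\<lambda>i. (v # ws) ! i) = cycle_arcs h c"
    using cycle_arcs_rotate[OF a(1)] unfolding c'_def by simp
qed

lemma card_cycles_through_le_card_walks:
  assumes fin: "\<And>x. finite {y. A x y}" and h: "0 < h"
  shows "card {C \<in> dir_cycles W A h. v \<in> fst ` C} \<le> card (walks A v (h - 1) v)"
proof -
  have "{C \<in> dir_cycles W A h. v \<in> fst ` C} \<subseteq> (\<lambda>ws. cycle_arcs h (\<lambda>i. (v # ws) ! i)) ` walks A v (h - 1) v"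
  proof
    fix C assume "C \<in> {C \<in> dir_cycles W A h. v \<in> fst ` C}"
    then obtain c a where C: "C = cycle_arcs h c" and cA: "\<forall>i<h. A (c i) (c ((i + 1) mod h))"
      and a: "a < h" "c a = v"
      by (auto simp: mem_dir_cycles_iff cycle_arcs_def)
    note rot = rotated_cycle_walk[OF h a cA]
    show "C \<in> (\<lambda>ws. cycle_arcs h (\<lambda>i. (v # ws) ! i)) ` walks A v (h - 1) v"
      by (rule image_eqI[OF _ rot(1)]) (simp only: rot(2) C)
  qed
  then show ?thesis
    using finite_walks[OF fin] by (meson card_image_le card_mono finite_imageI order_trans)
qed

lemma kept_walk_imp_cycle:
  assumes arcs: "\<And>x y. A x y \<Longrightarrow> y \<in> V \<and> \<phi> y = Suc (\<phi> x) mod h"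
    and h: "0 < h" and v: "v \<in> V" "\<phi> v < h" "S v" and walk: "kept_walk A v (h - 1) v S"
  shows "\<exists>C \<in> dir_cycles {u \<in> V. S u} A h. v \<in> fst ` C"
proof -
  obtain ws where len: "length ws = h - 1" and succ: "successively A (v # ws @ [v])"
    and kept: "\<forall>u\<in>set ws. S u"
    using walk by (auto simp: kept_walk_def walks_def)
  define c where "c i = (v # ws @ [v]) ! i" for i
  have ends: "c 0 = v" "c h = v"
    using len h nth_append_length[of ws v] by (simp_all add: c_def)
  have arc: "A (c i) (c (Suc i))" if "i < h" for i
    using successively_nth[OF succ, of i] that len h unfolding c_def by simp
  have colour: "\<phi> (c i) = (\<phi> v + i) mod h" if "i < h" for i
  proof (cases i)
    case (Suc k)
    then show ?thesis
      using successively_colour[of A \<phi> h, OF _ succ, of k] arcs that len unfolding c_def by simp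
  qed (simp add: c_def v)
  have "inj_on (\<phi> \<circ> c) {..<h}"
    by (subst inj_on_cong[where g = "\<lambda>i. (\<phi> v + i) mod h"]) (simp_all add: colour inj_on_add_mod)
  then have inj: "inj_on c {..<h}" by (rule inj_on_imageI2)
  have mem: "c i \<in> {u \<in> V. S u}" if "i < h" for i
  proof (cases i)
    case (Suc k)
    then have "c i \<in> set ws" using that len by (auto simp: c_def nth_append)
    moreover have "c i \<in> V" using arcs[OF arc[of k]] Suc that by simp
    ultimately show ?thesis using kept by simp
  qed (simp add: ends v)
  have closed: "A (c i) (c ((i + 1) mod h))" if "i < h" for i
  proof (cases "Suc i < h")
    case True
    then show ?thesis using arc[OF that] by simp
  next
    case False
    then have "Suc i = h" using that by simp
    then show ?thesis using arc[OF that] ends by simp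
  qed
  have "cycle_arcs h c \<in> dir_cycles {u \<in> V. S u} A h"
    unfolding mem_dir_cycles_iff using inj mem closed by blast
  moreover have "(c 0, c ((0 + 1) mod h)) \<in> cycle_arcs h c"
    unfolding cycle_arcs_def using h by (intro image_eqI[of _ _ 0]) auto
  then have "v \<in> fst ` cycle_arcs h c" using ends by force
  ultimately show ?thesis by blast
qed

lemma prob_cycle_through_ge:
  assumes fin: "finite V" and arcs: "\<And>x y. A x y \<Longrightarrow> y \<in> V \<and> \<phi> y = Suc (\<phi> x) mod h"
    and h: "0 < h" and v: "v \<in> V" "\<phi> v < h"
    and tree: "branching_tree A v js v" and len: "length js = h - 1"
    and pv: "p (\<phi> v) = 1"
    and p: "\<And>i. i < h - 1 \<Longrightarrow>
      (1/2) ^ (js ! i) \<le> p ((\<phi> v + Suc i) mod h) \<and> p ((\<phi> v + Suc i) mod h) \<le> 1"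
  shows "(1 - 1 / exp 1) ^ (h - 1) \<le> measure_pmf.prob (keep_pmf V \<phi> p)
    {S. \<exists>C \<in> dir_cycles {u \<in> V. S u} A h. v \<in> fst ` C}"
proof -
  have "(1 - 1 / exp 1) ^ (h - 1) \<le> measure_pmf.prob (keep_pmf V \<phi> p) {S. kept_walk A v (h - 1) v S}"
    using prob_kept_walk_ge[OF fin arcs _ tree] len h p by simp
  also have "\<dots> \<le> measure_pmf.prob (keep_pmf V \<phi> p) {S. \<exists>C \<in> dir_cycles {u \<in> V. S u} A h. v \<in> fst ` C}"
  proof (rule measure_pmf.finite_measure_mono_AE)
    have "S v \<in> set_pmf (bernoulli_pmf (p (\<phi> v)))" if "S \<in> set_pmf (keep_pmf V \<phi> p)" for S
      using that fin v unfolding keep_pmf_def by (auto simp: set_Pi_pmf PiE_dflt_def)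
    moreover have "False \<notin> set_pmf (bernoulli_pmf (p (\<phi> v)))" using pv by (simp add: set_pmf_iff)
    ultimately have "AE S in keep_pmf V \<phi> p. S v" unfolding AE_measure_pmf_iff by (metis (full_types))
    then show "AE S \<in> {S. kept_walk A v (h - 1) v S} in keep_pmf V \<phi> p.
        S \<in> {S. \<exists>C \<in> dir_cycles {u \<in> V. S u} A h. v \<in> fst ` C}"
      by (rule AE_mp) (use kept_walk_imp_cycle[OF arcs h v] in simp)
  qed simp
  finally show ?thesis .
qed

lemma many_cycles_imp_branching_tree:
  fixes \<Lambda> :: real
  assumes fin: "\<And>x. finite {y. A x y}" and deg: "\<And>x. card {y. A x y} < 2 ^ Suc K"
    and h: "0 < h" and \<Lambda>: "0 < \<Lambda>"
    and many: "\<Lambda> * real (2 * (K + 1)) ^ (h - 1)\<^sup>2 \<le> card {C \<in> dir_cycles W A h. v \<in> fst ` C}"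
  shows "\<exists>js. length js = h - 1 \<and> branching_tree A v js v \<and> \<Lambda> \<le> 2 ^ sum_list js"
proof -
  define B where "B = (2 * (K + 1)) ^ (h - 1)\<^sup>2"
  have B: "0 < B" unfolding B_def by simp
  have "card {C \<in> dir_cycles W A h. v \<in> fst ` C} \<le> card (walks A v (h - 1) v)"
    using fin h by (rule card_cycles_through_le_card_walks)
  then have walks: "\<Lambda> * B \<le> card (walks A v (h - 1) v)"
    using many unfolding B_def of_nat_power by linarith
  then have "walks A v (h - 1) v \<noteq> {}" using \<Lambda> B by (auto simp: mult_le_0_iff)
  then obtain js where js: "length js = h - 1" "branching_tree A v js v"
    and bound: "card (walks A v (h - 1) v) \<le> B * 2 ^ sum_list js"
    using card_walks_le_branching_tree[where A = A, OF fin deg] unfolding B_def by blast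
  have "real (card (walks A v (h - 1) v)) \<le> real B * 2 ^ sum_list js"
    using of_nat_mono[OF bound, where 'a = real] by simp
  then have "real B * \<Lambda> \<le> real B * 2 ^ sum_list js" using walks by (simp add: mult.commute)
  then show ?thesis using js B by auto
qed

section \<open>Dyadic sampling vectors\<close>

lemma dyadic_vector_in_Product:
  assumes p: "\<And>c. c < h \<Longrightarrow> \<exists>j \<le> nat \<lceil>log 2 \<Lambda>\<rceil>. p c = (1/2) ^ j"
    and prod: "(\<Prod>c<h. p c) = (1/2) ^ nat \<lceil>log 2 \<Lambda>\<rceil>" and \<Lambda>: "1/2 \<le> \<Lambda>"
  shows "p \<in> Product h \<Lambda>"
  unfolding Product_def
proof (intro CollectI conjI allI impI)
  fix c assume "c < h"
  then obtain j where "j \<le> nat \<lceil>log 2 \<Lambda>\<rceil>" "p c = (1/2) ^ j" using p by blast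
  then show "\<exists>j::int. 0 \<le> j \<and> real_of_int j \<le> log 2 \<Lambda> + 1 \<and> p c = 2 powr (- real_of_int j)"
    using nat_ceiling_log2_bounds(2)[OF \<Lambda>]
    by (intro exI[of _ "int j"]) (auto simp: powr_minus powr_realpow power_one_over inverse_eq_divide)
next
  have "(1/2) ^ nat \<lceil>log 2 \<Lambda>\<rceil> \<le> 1 / \<Lambda>"
    using nat_ceiling_log2_bounds(1)[OF \<Lambda>] \<Lambda> by (simp add: power_one_over frac_le)
  then show "(\<Prod>c<h. p c) \<le> 1 / \<Lambda>" using prod by simp
qed

lemma exists_Product_vector:
  assumes h: "0 < h" and a: "a < h" and len: "length js = h - 1"
    and \<Lambda>: "1/2 \<le> \<Lambda>" "\<Lambda> \<le> 2 ^ sum_list js"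
  shows "\<exists>js' p. list_all2 (\<le>) js' js \<and> p \<in> Product h \<Lambda> \<and> p a = 1 \<and>
    (\<forall>i < h - 1. p ((a + Suc i) mod h) = (1/2) ^ (js' ! i))"
proof -
  define J where "J = nat \<lceil>log 2 \<Lambda>\<rceil>"
  have "log 2 \<Lambda> \<le> sum_list js"
    using \<Lambda> log_le_cancel_iff[of 2 \<Lambda> "2 ^ sum_list js"] by (simp add: log_nat_power)
  then have "J \<le> sum_list js" unfolding J_def by linarith
  then obtain js' where js': "list_all2 (\<le>) js' js" "sum_list js' = J"
    using exists_list_le_sum_list_eq by blast
  define qs where "qs = 0 # js'"
  have qs: "length qs = h" "sum_list qs = J"
    using js' len h list_all2_lengthD[OF js'(1)] by (auto simp: qs_def)
  (* p reads the list qs cyclically, starting at colour a. *)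
  define p where "p c = (1/2::real) ^ (qs ! ((c + (h - a)) mod h))" for c
  have p_rot: "p ((a + i) mod h) = (1/2) ^ (qs ! i)" if "i < h" for i
  proof -
    have "((a + i) mod h + (h - a)) mod h = (a + i + (h - a)) mod h" by (rule mod_add_left_eq)
    also have "a + i + (h - a) = i + h" using a by simp
    finally show ?thesis using that by (simp add: p_def)
  qed
  have "p \<in> Product h \<Lambda>"
  proof (rule dyadic_vector_in_Product[OF _ _ \<Lambda>(1)])
    fix c assume "c < h"
    then obtain i where "i < h" "c = (a + i) mod h"
      using add_mod_image_lessThan[OF h, of a] by blast
    moreover have "qs ! i \<le> J" if "i < h" for i
      using elem_le_sum_list[of i qs] that qs by simp
    ultimately show "\<exists>j \<le> nat \<lceil>log 2 \<Lambda>\<rceil>. p c = (1/2) ^ j" using p_rot J_def by blast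
  next
    have "(\<Prod>c<h. p c) = (\<Prod>i<h. (1/2) ^ (qs ! i))"
      using prod_rotate_mod[OF h, of p a] p_rot by simp
    also have "\<dots> = (1/2) ^ sum_list qs"
      using qs(1) by (simp add: power_sum[symmetric] sum_list_sum_nth atLeast0LessThan)
    finally show "(\<Prod>c<h. p c) = (1/2) ^ nat \<lceil>log 2 \<Lambda>\<rceil>" using qs(2) J_def by simp
  qed
  moreover have "p a = 1" using p_rot[of 0] a h by (simp add: qs_def)
  moreover have "p ((a + Suc i) mod h) = (1/2) ^ (js' ! i)" if "i < h - 1" for i
    using p_rot[of "Suc i"] that by (simp add: qs_def)
  ultimately show ?thesis using js'(1) by blast
qed

section \<open>Colour-cyclic subgraphs\<close>

lemma col_arc_coloured:
  assumes "simple_graph V E" and "col_arc E \<phi> h x y"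
  shows "y \<in> V \<and> \<phi> y = Suc (\<phi> x) mod h"
  using assms by (auto simp: simple_graph_def col_arc_def)

lemma col_arc_out_degree:
  assumes G: "simple_graph V E" and n: "card V = n" "0 < n"
  shows "finite {y. col_arc E \<phi> h x y}" "card {y. col_arc E \<phi> h x y} < 2 ^ Suc (nat \<lfloor>log 2 (real n)\<rfloor>)"
proof -
  have finV: "finite V" and sub: "{y. col_arc E \<phi> h x y} \<subseteq> V"
    using G col_arc_coloured[OF G] by (auto simp: simple_graph_def)
  then show "finite {y. col_arc E \<phi> h x y}" by (rule finite_subset[rotated])
  have "card {y. col_arc E \<phi> h x y} \<le> n" using card_mono[OF finV sub] n by simp
  also have "n < 2 ^ Suc (nat \<lfloor>log 2 (real n)\<rfloor>)" using floor_log2_bounds(1) n by simp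
  finally show "card {y. col_arc E \<phi> h x y} < 2 ^ Suc (nat \<lfloor>log 2 (real n)\<rfloor>)" .
qed

lemma floor_log2_factor_le:
  assumes n: "2 \<le> n" and h: "2 \<le> h"
  shows "real (2 * (nat \<lfloor>log 2 (real n)\<rfloor> + 1)) \<le> 2 * real h * log 2 (real n)"
proof -
  define K where "K = nat \<lfloor>log 2 (real n)\<rfloor>"
  have log_n: "1 \<le> log 2 (real n)" using n by simp
  have "real K \<le> log 2 (real n)" using floor_log2_bounds(2) n unfolding K_def by simp
  then have "real (2 * (K + 1)) \<le> 4 * log 2 (real n)" using log_n by simp
  also have "\<dots> \<le> 2 * real h * log 2 (real n)" using h log_n by (intro mult_right_mono) auto
  finally show ?thesis unfolding K_def .
qed

theorem lemma10:
  fixes V :: "'a set" and E :: "'a \<Rightarrow> 'a \<Rightarrow> bool" and n h :: nat and \<Lambda> :: real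
    and v :: 'a and \<phi> :: "'a \<Rightarrow> nat"
  assumes "simple_graph V E" and "card V = n" and "n \<ge> 2"
    and "h \<ge> 3" and "\<Lambda> > 0" and "\<Lambda> \<ge> 1/2"
    and "v \<in> V" and "\<forall>u\<in>V. \<phi> u < h"
    and "real (t_cycles V E \<phi> h v) \<ge> \<Lambda> * (2 * real h * log 2 (real n)) ^ ((h - 1)^2)"
  shows "\<exists>p \<in> Product h \<Lambda>.
    measure_pmf.prob (keep_pmf V \<phi> p)
      {S. \<exists>C \<in> dir_cycles {u \<in> V. S u} (col_arc E \<phi> h) h. v \<in> fst ` C}
    \<ge> (1 - 1 / exp 1) ^ (h - 1)"
proof -
  note G = assms(1) and n = assms(2,3) and \<Lambda> = assms(5,6) and v = assms(7)
  define K where "K = nat \<lfloor>log 2 (real n)\<rfloor>"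
  have h: "0 < h" "2 \<le> h" and v_col: "\<phi> v < h" and n0: "0 < n" using assms(3,4,7,8) by auto
  have finV: "finite V" using G by (simp add: simple_graph_def)
  define A where "A = col_arc E \<phi> h"
  have arcs: "\<And>x y. A x y \<Longrightarrow> y \<in> V \<and> \<phi> y = Suc (\<phi> x) mod h"
    unfolding A_def by (rule col_arc_coloured[OF G])
  note out_deg = col_arc_out_degree[OF G n(1) n0, of \<phi> h, folded A_def K_def]
  have "real (2 * (K + 1)) ^ (h - 1)\<^sup>2 \<le> (2 * real h * log 2 (real n)) ^ (h - 1)\<^sup>2"
    using floor_log2_factor_le[OF n(2) h(2)] unfolding K_def by (intro power_mono) auto
  then have many: "\<Lambda> * real (2 * (K + 1)) ^ (h - 1)\<^sup>2 \<le> card {C \<in> dir_cycles V A h. v \<in> fst ` C}"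
    using assms(9) \<Lambda> unfolding t_cycles_def A_def by (meson less_imp_le mult_left_mono order_trans)
  obtain js where js: "length js = h - 1" "branching_tree A v js v" "\<Lambda> \<le> 2 ^ sum_list js"
    using many_cycles_imp_branching_tree[OF out_deg h(1) \<Lambda>(1) many] by blast
  then obtain js' p where js': "list_all2 (\<le>) js' js" and p: "p \<in> Product h \<Lambda>" "p (\<phi> v) = 1"
    "\<forall>i < h - 1. p ((\<phi> v + Suc i) mod h) = (1/2) ^ (js' ! i)"
    using exists_Product_vector[OF h(1) v_col js(1) \<Lambda>(2) js(3)] by blast
  have tree: "branching_tree A v js' v" using branching_tree_mono[OF js' js(2)] .
  have len: "length js' = h - 1" using list_all2_lengthD[OF js'] js(1) by simp
  have pc: "(1/2) ^ (js' ! i) \<le> p ((\<phi> v + Suc i) mod h) \<and> p ((\<phi> v + Suc i) mod h) \<le> 1"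
    if "i < h - 1" for i
    using p(3) that by (simp add: power_le_one)
  have "(1 - 1 / exp 1) ^ (h - 1) \<le> measure_pmf.prob (keep_pmf V \<phi> p)
      {S. \<exists>C \<in> dir_cycles {u \<in> V. S u} A h. v \<in> fst ` C}"
    using finV arcs h(1) v v_col tree len p(2) pc by (rule prob_cycle_through_ge)
  then show ?thesis using p(1) unfolding A_def by blast
qed

end
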